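(* Let $d\geq3$ and $h\geq 2$. Then \[ \nu_2(T'(d,h))=\begin{cases}\dfrac{2\big((d-1)^{h+1}-(d-1)\big)}{(d-1)^2-1} & \text{if } h \text{ is even},\\[2ex] \dfrac{2\big((d-1)^{h+1}-1\big)}{(d-1)^2-1} & \text{if } h \text{ is odd}.\end{cases} \]
   Context: $T'(d,h)$ is the rooted tree of depth $h$ in which the root has $d-1$ children, every non-root vertex at depth less than $h$ has $d-1$ children (so degree $d$), and all leaves are at depth $h$ (equivalently, the $d$-regular tree of depth $h$ with one principal branch of the root deleted). A $2$-matching of a graph is a set of edges such that every vertex is incident to at most two of them; $\nu_2(G)$ is the maximum size of a $2$-matching of $G$. *)

theory Defs
  imports Complex_Main
begin

text \<open>Vertices of T'(d,h): words over {0..<d-1} of length at most h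
  (the word is the path from the root). The root is the empty word; it has d-1
  children, every vertex at depth < h has d-1 children, leaves are at depth h.\<close>

definition tree_verts :: "nat \<Rightarrow> nat \<Rightarrow> nat list set" where
  "tree_verts d h = {xs. length xs \<le> h \<and> (\<forall>i\<in>set xs. i < d - 1)}"

definition tree_edges :: "nat \<Rightarrow> nat \<Rightarrow> nat list set set" where
  "tree_edges d h = {{xs, xs @ [i]} | xs i. xs \<in> tree_verts d h \<and> length xs < h \<and> i < d - 1}"

definition two_matching :: "'a set set \<Rightarrow> 'a set set \<Rightarrow> bool" where
  "two_matching E M \<longleftrightarrow> M \<subseteq> E \<and> (\<forall>v. card {e\<in>M. v \<in> e} \<le> 2)"

definition nu2 :: "'a set set \<Rightarrow> nat" where
  "nu2 E = Max {card M | M. two_matching E M}"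

end

theory Submission
  imports Defs
begin

text \<open>Call the edge joining depth k to depth k + 1 an edge of depth k, and write q = d - 1.
  Every edge of depth k or k - 1 contains one of the q^k vertices of depth k, so in a
  2-matching (edges of depth k) + (edges of depth k - 1) \<le> 2 q^k. Pairing the depths from
  the leaves upwards bounds the size by 2 q^(h-1) + 2 q^(h-3) + \<dots>, and this bound is attained
  by taking two child edges at every vertex of depth h - 1, h - 3, \<dots>\<close>

fun alt_power_sum :: "nat \<Rightarrow> nat \<Rightarrow> nat" where
  "alt_power_sum q 0 = 0"
| "alt_power_sum q (Suc 0) = 2"
| "alt_power_sum q (Suc (Suc n)) = 2 * q ^ Suc n + alt_power_sum q n"

lemma alt_power_sum_closed_form:
  "real (alt_power_sum q n) * ((real q)\<^sup>2 - 1) =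
   (if even n then 2 * (real q ^ (n + 1) - real q) else 2 * (real q ^ (n + 1) - 1))"
  by (induction q n rule: alt_power_sum.induct) (auto simp: algebra_simps power2_eq_square)

lemma alt_power_sum_eq_sum:
  "alt_power_sum q n = (\<Sum>k<n. if even (n - 1 - k) then 2 * q ^ k else 0)"
proof (induction q n rule: alt_power_sum.induct)
  case (3 q n)
  have "(\<Sum>k<n. if even (Suc (Suc n) - 1 - k) then 2 * q ^ k else 0) =
        (\<Sum>k<n. if even (n - 1 - k) then 2 * q ^ k else (0::nat))"
  proof (intro sum.cong refl)
    fix k assume "k \<in> {..<n}"
    then have "Suc (Suc n) - 1 - k = (n - 1 - k) + 2" by auto
    then show "(if even (Suc (Suc n) - 1 - k) then 2 * q ^ k else 0) =
               (if even (n - 1 - k) then 2 * q ^ k else (0::nat))" by simp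
  qed
  then show ?case using 3 by simp
qed auto

lemma sum_le_alt_power_sum:
  fixes a :: "nat \<Rightarrow> nat"
  assumes "0 < n \<Longrightarrow> a 0 \<le> 2"
    and "\<And>k. 0 < k \<Longrightarrow> k < n \<Longrightarrow> a k + a (k - 1) \<le> 2 * q ^ k"
  shows "(\<Sum>k<n. a k) \<le> alt_power_sum q n"
  using assms
proof (induction q n rule: alt_power_sum.induct)
  case (3 q n)
  then have "(\<Sum>k<n. a k) \<le> alt_power_sum q n" by simp
  moreover have "a (Suc n) + a n \<le> 2 * q ^ Suc n" using "3.prems"(2)[of "Suc n"] by simp
  ultimately show ?case by simp
qed auto

lemma card_two_matching_meeting:
  assumes "two_matching E M" and "finite V"
  shows "card {e \<in> M. e \<inter> V \<noteq> {}} \<le> 2 * card V"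
proof -
  have "{e \<in> M. e \<inter> V \<noteq> {}} = (\<Union>v\<in>V. {e \<in> M. v \<in> e})" by blast
  then have "card {e \<in> M. e \<inter> V \<noteq> {}} \<le> (\<Sum>v\<in>V. card {e \<in> M. v \<in> e})"
    using card_UN_le[OF assms(2)] by simp
  also have "\<dots> \<le> (\<Sum>v\<in>V. 2)"
    using assms(1) unfolding two_matching_def by (intro sum_mono) auto
  finally show ?thesis by simp
qed

lemma nu2_eqI:
  assumes "finite E"
    and "\<And>M. two_matching E M \<Longrightarrow> card M \<le> b"
    and "two_matching E M" and "card M = b"
  shows "nu2 E = b"
proof -
  have "{card M | M. two_matching E M} \<subseteq> card ` Pow E"
    unfolding two_matching_def by auto
  then have "finite {card M | M. two_matching E M}"
    using assms(1) by (meson finite_Pow_iff finite_imageI finite_subset)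
  then show ?thesis
    unfolding nu2_def using assms(2-4) by (intro Max_eqI) auto
qed

definition edge_depth :: "nat list set \<Rightarrow> nat" where
  "edge_depth e = Min (length ` e)"

lemma edge_depth_child_edge [simp]: "edge_depth {xs, xs @ [i]} = length xs"
  unfolding edge_depth_def by simp

lemma inj_child_edge: "inj (\<lambda>(xs, i). {xs, xs @ [i :: nat]})"
proof (rule injI, clarify)
  fix xs ys :: "nat list" and i j :: nat
  assume eq: "{xs, xs @ [i]} = {ys, ys @ [j]}"
  then have "length xs = length ys"
    using edge_depth_child_edge[of xs i] edge_depth_child_edge[of ys j] by metis
  moreover have "xs \<in> {ys, ys @ [j]}" "xs @ [i] \<in> {ys, ys @ [j]}" using eq by blast+
  ultimately show "xs = ys \<and> i = j" by auto
qed

lemma child_edge_in_tree_edges: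
  "xs \<in> tree_verts d h \<Longrightarrow> length xs < h \<Longrightarrow> i < d - 1 \<Longrightarrow> {xs, xs @ [i]} \<in> tree_edges d h"
  unfolding tree_edges_def by blast

lemma finite_tree_verts: "finite (tree_verts d h)"
proof -
  have "tree_verts d h = {xs. set xs \<subseteq> {..<d - 1} \<and> length xs \<le> h}"
    unfolding tree_verts_def by auto
  then show ?thesis using finite_lists_length_le[of "{..<d - 1}" h] by simp
qed

lemma card_tree_verts_depth:
  assumes "k \<le> h"
  shows "card {xs \<in> tree_verts d h. length xs = k} = (d - 1) ^ k"
proof -
  have "{xs \<in> tree_verts d h. length xs = k} = {xs. set xs \<subseteq> {..<d - 1} \<and> length xs = k}"
    unfolding tree_verts_def using assms by auto
  then show ?thesis using card_lists_length_eq[of "{..<d - 1}" k] by simp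
qed

lemma finite_tree_edges: "finite (tree_edges d h)"
proof -
  have "tree_edges d h \<subseteq> (\<lambda>(xs, i). {xs, xs @ [i]}) ` (tree_verts d h \<times> {..<d - 1})"
    unfolding tree_edges_def by auto
  then show ?thesis
    using finite_tree_verts by (meson finite_SigmaI finite_imageI finite_lessThan finite_subset)
qed

lemma card_eq_sum_card_depth:
  assumes "M \<subseteq> tree_edges d h"
  shows "card M = (\<Sum>k<h. card {e \<in> M. edge_depth e = k})"
proof -
  have "finite M" using assms finite_tree_edges finite_subset by blast
  moreover have "edge_depth ` M \<subseteq> {..<h}" using assms unfolding tree_edges_def by auto
  ultimately show ?thesis using sum.group[of M "{..<h}" edge_depth "\<lambda>_. 1::nat"] by simp
qed

lemma tree_edges_near_depth_meet:
  assumes "M \<subseteq> tree_edges d h"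
  shows "{e \<in> M. edge_depth e = k \<or> edge_depth e + 1 = k}
         \<subseteq> {e \<in> M. e \<inter> {xs \<in> tree_verts d h. length xs = k} \<noteq> {}}"
proof
  fix e assume e: "e \<in> {e \<in> M. edge_depth e = k \<or> edge_depth e + 1 = k}"
  then obtain xs i where xs: "e = {xs, xs @ [i]}" "xs \<in> tree_verts d h" "length xs < h" "i < d - 1"
    using assms unfolding tree_edges_def by blast
  then have "xs @ [i] \<in> tree_verts d h" unfolding tree_verts_def by auto
  with e xs show "e \<in> {e \<in> M. e \<inter> {xs \<in> tree_verts d h. length xs = k} \<noteq> {}}" by auto
qed

lemma two_matching_tree_depth_bound:
  assumes "two_matching (tree_edges d h) M" and "k < h"
  shows "card {e \<in> M. edge_depth e = k \<or> edge_depth e + 1 = k} \<le> 2 * (d - 1) ^ k"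
proof -
  have M: "M \<subseteq> tree_edges d h" using assms(1) unfolding two_matching_def by simp
  then have "finite M" using finite_tree_edges finite_subset by blast
  then have "card {e \<in> M. edge_depth e = k \<or> edge_depth e + 1 = k}
             \<le> card {e \<in> M. e \<inter> {xs \<in> tree_verts d h. length xs = k} \<noteq> {}}"
    by (intro card_mono tree_edges_near_depth_meet[OF M]) auto
  also have "\<dots> \<le> 2 * card {xs \<in> tree_verts d h. length xs = k}"
    using finite_tree_verts by (intro card_two_matching_meeting[OF assms(1)]) simp
  also have "\<dots> = 2 * (d - 1) ^ k"
    using card_tree_verts_depth assms(2) by simp
  finally show ?thesis .
qed

lemma two_matching_tree_card_le:
  assumes "two_matching (tree_edges d h) M"
  shows "card M \<le> alt_power_sum (d - 1) h"
proof -
  define a where "a k = card {e \<in> M. edge_depth e = k}" for k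
  have M: "M \<subseteq> tree_edges d h" using assms unfolding two_matching_def by simp
  then have "finite M" using finite_tree_edges finite_subset by blast
  have "a 0 \<le> 2" if "0 < h"
    using two_matching_tree_depth_bound[OF assms that] unfolding a_def by simp
  moreover have "a k + a (k - 1) \<le> 2 * (d - 1) ^ k" if "0 < k" "k < h" for k
  proof -
    have "a k + a (k - 1) = card ({e \<in> M. edge_depth e = k} \<union> {e \<in> M. edge_depth e = k - 1})"
      unfolding a_def using \<open>finite M\<close> that(1) by (intro card_Un_disjoint[symmetric]) auto
    also have "{e \<in> M. edge_depth e = k} \<union> {e \<in> M. edge_depth e = k - 1}
               = {e \<in> M. edge_depth e = k \<or> edge_depth e + 1 = k}"
      using that(1) by auto
    finally show ?thesis using two_matching_tree_depth_bound[OF assms that(2)] by simp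
  qed
  ultimately have "(\<Sum>k<h. a k) \<le> alt_power_sum (d - 1) h"
    by (intro sum_le_alt_power_sum)
  then show ?thesis using card_eq_sum_card_depth[OF M] unfolding a_def by simp
qed

definition alternate_matching :: "nat \<Rightarrow> nat \<Rightarrow> nat list set set" where
  "alternate_matching d h = {{xs, xs @ [i]} | xs i.
     xs \<in> tree_verts d h \<and> length xs < h \<and> even (h - 1 - length xs) \<and> i < (2::nat)}"

lemma alternate_matching_subset:
  "d \<ge> 3 \<Longrightarrow> alternate_matching d h \<subseteq> tree_edges d h"
  unfolding alternate_matching_def by (auto intro: child_edge_in_tree_edges)

text \<open>Parents in the matching have even height h - 1 - length, children odd height, so every
  vertex is an endpoint of the matching in one role only.\<close>

lemma alternate_matching_incident:
  "{e \<in> alternate_matching d h. v \<in> e} \<subseteq>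
     (if length v < h \<and> even (h - 1 - length v) then {{v, v @ [0]}, {v, v @ [1]}}
      else {{butlast v, v}})"
proof
  fix e assume "e \<in> {e \<in> alternate_matching d h. v \<in> e}"
  then obtain xs i where e: "e = {xs, xs @ [i]}" "length xs < h" "even (h - 1 - length xs)"
      "i < (2::nat)" and v: "v \<in> e"
    unfolding alternate_matching_def by auto
  show "e \<in> (if length v < h \<and> even (h - 1 - length v) then {{v, v @ [0]}, {v, v @ [1]}}
             else {{butlast v, v}})"
  proof (cases "v = xs")
    case True
    then have "e = {v, v @ [0]} \<or> e = {v, v @ [1]}" using e(1,4) by (auto simp: less_2_cases_iff)
    then show ?thesis using True e(2,3) by simp
  next
    case False
    then have vi: "v = xs @ [i]" using v e(1) by simp
    then have "e = {butlast v, v}" using e(1) by simp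
    moreover have "\<not> (length v < h \<and> even (h - 1 - length v))"
    proof
      assume "length v < h \<and> even (h - 1 - length v)"
      moreover have "h - 1 - length xs = Suc (h - 1 - length v)" if "length v < h"
        using vi that by simp
      ultimately show False using e(3) by simp
    qed
    ultimately show ?thesis by (simp only: if_False singleton_iff)
  qed
qed

lemma two_matching_alternate_matching:
  assumes "d \<ge> 3"
  shows "two_matching (tree_edges d h) (alternate_matching d h)"
  unfolding two_matching_def
proof (intro conjI allI)
  fix v :: "nat list"
  have "card {e \<in> alternate_matching d h. v \<in> e} \<le>
    card (if length v < h \<and> even (h - 1 - length v) then {{v, v @ [0]}, {v, v @ [1]}}
          else {{butlast v, v}})"
    by (intro card_mono alternate_matching_incident) auto
  also have "\<dots> \<le> 2" by (simp add: card_insert_if)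
  finally show "card {e \<in> alternate_matching d h. v \<in> e} \<le> 2" .
qed (rule alternate_matching_subset[OF assms])

lemma card_alternate_matching_depth:
  assumes "k < h"
  shows "card {e \<in> alternate_matching d h. edge_depth e = k} =
         (if even (h - 1 - k) then 2 * (d - 1) ^ k else 0)"
proof -
  have "{e \<in> alternate_matching d h. edge_depth e = k} = (\<lambda>(xs, i). {xs, xs @ [i]}) `
     ({xs \<in> tree_verts d h. length xs = k \<and> even (h - 1 - k)} \<times> {..<2::nat})"
    unfolding alternate_matching_def using assms by (auto 0 3)
  moreover have "inj_on (\<lambda>(xs, i). {xs, xs @ [i::nat]}) X" for X
    using inj_child_edge by (rule inj_on_subset) simp
  ultimately show ?thesis
    using card_tree_verts_depth[of k h d] assms by (simp add: card_image card_cartesian_product)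
qed

lemma card_alternate_matching:
  assumes "d \<ge> 3"
  shows "card (alternate_matching d h) = alt_power_sum (d - 1) h"
proof -
  have "card (alternate_matching d h) =
        (\<Sum>k<h. card {e \<in> alternate_matching d h. edge_depth e = k})"
    using card_eq_sum_card_depth[OF alternate_matching_subset[OF assms]] .
  also have "\<dots> = (\<Sum>k<h. if even (h - 1 - k) then 2 * (d - 1) ^ k else 0)"
    by (intro sum.cong refl) (simp add: card_alternate_matching_depth del: dvd_diff_nat)
  also have "\<dots> = alt_power_sum (d - 1) h"
    by (rule alt_power_sum_eq_sum[symmetric])
  finally show ?thesis .
qed

lemma nu2_tree_edges:
  assumes "d \<ge> 3"
  shows "nu2 (tree_edges d h) = alt_power_sum (d - 1) h"
  using finite_tree_edges two_matching_tree_card_le two_matching_alternate_matching[OF assms]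
    card_alternate_matching[OF assms]
  by (rule nu2_eqI)

theorem lemma5p4:
  fixes d h :: nat
  assumes "d \<ge> 3" and "h \<ge> 2"
  shows "real (nu2 (tree_edges d h)) =
    (if even h
     then 2 * ((real d - 1) ^ (h + 1) - (real d - 1)) / ((real d - 1)^2 - 1)
     else 2 * ((real d - 1) ^ (h + 1) - 1) / ((real d - 1)^2 - 1))"
proof -
  have q: "real (d - 1) = real d - 1" using assms by simp
  have "(real d - 1)\<^sup>2 > 1\<^sup>2" using assms by (intro power_strict_mono) auto
  then have "(real d - 1)\<^sup>2 - 1 \<noteq> 0" by simp
  then show ?thesis
    using nu2_tree_edges[OF assms(1)] alt_power_sum_closed_form[of "d - 1" h]
    unfolding q by (simp add: eq_divide_eq)
qed

end
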